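(* In the standard LLP setup, suppose $K^\uparrow\neq\emptyset$. If $N_{mcf\bar c}$ is defined and $N\ge N_{mcf\bar c}+1$, then $L(G,\gamma^N_{optm})=\overline{K^\uparrow}$.
   Context: Standard LLP setup. $\Sigma=\Sigma_c\,\dot\cup\,\Sigma_{uc}$ is a finite alphabet partitioned into controllable and uncontrollable events. The plant $G$ has generated language $L(G)$ and marked language $L_m(G)$ with $L(G)=\overline{L_m(G)}$ ($\overline{M}$ = set of prefixes of strings in $M$). The legal language $K\subseteq L_m(G)$ satisfies $K=\overline{K}\cap L_m(G)$ ($K$ need not be prefix-closed). For a prefix-closed $L$, $M$ is controllable w.r.t. $L$ if $\overline{M}\Sigma_{uc}\cap L\subseteq\overline{M}$; $K^\uparrow$ is the supremal sublanguage of $K$ controllable w.r.t. $L(G)$. For a language $L$ and $s\in\Sigma^*$: $L/s=\{t: st\in L\}$; $L|_N=\{t\in L:|t|\le N\}$; $\Sigma_{L(G)}(s)=\{\sigma\in\Sigma: s\sigma\in L(G)\}$. $M^{\uparrow/s|_N}$ is the supremal sublanguage of $M$ controllable w.r.t. $L(G)/s|_N$. Optimistic attitude: $f^N_{optm}(s)=[K/s|_N\cup(\overline{K}/s|_N\setminus\overline{K}/s|_{N-1})]^{\uparrow/s|_N}$; control policy $\gamma^N_{optm}(s)=(\overline{f^N_{optm}(s)}\cap\Sigma)\cup(\Sigma_{uc}\cap\Sigma_{L(G)}(s))$. Closed-loop language $L(G,\gamma)$: $\epsilon\in L(G,\gamma)$, and $s\sigma\in L(G,\gamma)$ iff $s\in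 L(G,\gamma)$, $s\sigma\in L(G)$, $\sigma\in\gamma(s)$. Define $L_c(G)=\{s\in L(G): s\sigma\notin L(G)\ \forall\sigma\in\Sigma_{uc}\}$, $K_{mc}=K\cap L_c(G)$, and $K_{f\bar c}=\{s\in\overline{K}: \exists\sigma\in\Sigma_{uc},\ s\sigma\in L(G)\setminus\overline{K}\}$. Then $N_{mcf\bar c}=\max\{|t|: \exists s\in K_{mc}\cup\{\epsilon\},\ st\in K_{f\bar c}\text{ and } sv\notin K_{f\bar c}\cup K_{mc}\text{ for every nonempty proper prefix } v \text{ of } t\}$ if this maximum exists; otherwise undefined. *)

theory Defs
  imports Main
begin

text \<open>Strings over the alphabet are lists over a finite type 'a (the alphabet is UNIV);
  languages are sets of lists.\<close>

definition pre :: "'a list set \<Rightarrow> 'a list set" where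
  "pre M = {s. \<exists>t. s @ t \<in> M}"

definition controllable :: "'a set \<Rightarrow> 'a list set \<Rightarrow> 'a list set \<Rightarrow> bool" where
  "controllable Suc' M L \<longleftrightarrow> {s @ [\<sigma>] | s \<sigma>. s \<in> pre M \<and> \<sigma> \<in> Suc'} \<inter> L \<subseteq> pre M"

definition supC :: "'a set \<Rightarrow> 'a list set \<Rightarrow> 'a list set \<Rightarrow> 'a list set" where
  "supC Suc' M L = \<Union>{M'. M' \<subseteq> M \<and> controllable Suc' M' L}"

definition quot :: "'a list set \<Rightarrow> 'a list \<Rightarrow> 'a list set" where
  "quot L s = {t. s @ t \<in> L}"

definition trunc :: "'a list set \<Rightarrow> nat \<Rightarrow> 'a list set" where
  "trunc L N = {t \<in> L. length t \<le> N}"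

definition f_optm :: "'a set \<Rightarrow> 'a list set \<Rightarrow> 'a list set \<Rightarrow> nat \<Rightarrow> 'a list \<Rightarrow> 'a list set" where
  "f_optm Suc' LG K N s =
     supC Suc' (trunc (quot K s) N \<union>
                (trunc (quot (pre K) s) N - trunc (quot (pre K) s) (N - 1)))
          (trunc (quot LG s) N)"

definition gamma_optm :: "'a set \<Rightarrow> 'a list set \<Rightarrow> 'a list set \<Rightarrow> nat \<Rightarrow> 'a list \<Rightarrow> 'a set" where
  "gamma_optm Suc' LG K N s =
     {\<sigma>. [\<sigma>] \<in> pre (f_optm Suc' LG K N s)} \<union> (Suc' \<inter> {\<sigma>. s @ [\<sigma>] \<in> LG})"

inductive_set closed_loop :: "'a list set \<Rightarrow> ('a list \<Rightarrow> 'a set) \<Rightarrow> 'a list set"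
  for LG :: "'a list set" and \<gamma> :: "'a list \<Rightarrow> 'a set" where
  eps: "[] \<in> closed_loop LG \<gamma>"
| step: "s \<in> closed_loop LG \<gamma> \<Longrightarrow> s @ [\<sigma>] \<in> LG \<Longrightarrow> \<sigma> \<in> \<gamma> s \<Longrightarrow> s @ [\<sigma>] \<in> closed_loop LG \<gamma>"

definition Lc :: "'a set \<Rightarrow> 'a list set \<Rightarrow> 'a list set" where
  "Lc Suc' LG = {s \<in> LG. \<forall>\<sigma>\<in>Suc'. s @ [\<sigma>] \<notin> LG}"

definition K_mc :: "'a set \<Rightarrow> 'a list set \<Rightarrow> 'a list set \<Rightarrow> 'a list set" where
  "K_mc Suc' LG K = K \<inter> Lc Suc' LG"

definition K_fc :: "'a set \<Rightarrow> 'a list set \<Rightarrow> 'a list set \<Rightarrow> 'a list set" where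
  "K_fc Suc' LG K = {s \<in> pre K. \<exists>\<sigma>\<in>Suc'. s @ [\<sigma>] \<in> LG - pre K}"

definition Nmcf_set :: "'a set \<Rightarrow> 'a list set \<Rightarrow> 'a list set \<Rightarrow> nat set" where
  "Nmcf_set Suc' LG K =
     {length t | s t. s \<in> K_mc Suc' LG K \<union> {[]} \<and> s @ t \<in> K_fc Suc' LG K \<and>
        (\<forall>v w. v \<noteq> [] \<and> w \<noteq> [] \<and> t = v @ w \<longrightarrow>
               s @ v \<notin> K_fc Suc' LG K \<union> K_mc Suc' LG K)}"

definition Nmcf :: "'a set \<Rightarrow> 'a list set \<Rightarrow> 'a list set \<Rightarrow> nat option" where
  "Nmcf Suc' LG K =
     (if Nmcf_set Suc' LG K \<noteq> {} \<and> finite (Nmcf_set Suc' LG K)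
      then Some (Max (Nmcf_set Suc' LG K)) else None)"

end

theory Submission
  imports Defs
begin

text \<open>
  Write R for the prefix closure of the supremal controllable sublanguage of K. Suppose s is in R
  and the optimistic policy enables a controllable event after s. Consider the continuations of s
  that follow the plan f_optm for its first N steps and then stay in pre K, stopped at the first
  string of K_mc. None of them reaches K_fc: otherwise, measured from the last string of K_mc (or
  the empty string) before it, the first K_fc prefix would lie at distance at least N, exceeding
  N_mcf, because all prefixes of s lie in R and the plan avoids K_fc within its horizon. So R
  together with these continuations is prefix closed, closed under uncontrollable events, and
  every string in it extends into K; its K-strings are therefore a controllable sublanguage of K,
  and the whole region lies in R. Conversely, the strings of R after s truncated to length N form
  a controllable part of the optimistic target, so every event leading into R is enabled.
\<close>

lemma subset_pre: "A \<subseteq> pre A"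
  unfolding pre_def by (auto intro: exI[of _ "[]"])

lemma pre_mono: "A \<subseteq> B \<Longrightarrow> pre A \<subseteq> pre B"
  unfolding pre_def by blast

lemma pre_appendD: "x @ y \<in> pre A \<Longrightarrow> x \<in> pre A"
  unfolding pre_def by (auto intro: exI[of _ "y @ _"])

lemma take_mem_pre: "x \<in> pre A \<Longrightarrow> take m x \<in> pre A"
  using pre_appendD[of "take m x" "drop m x"] by simp

lemma pre_idem: "pre (pre A) = pre A"
  using subset_pre pre_appendD unfolding pre_def by blast

lemma pre_eqI:
  assumes "\<And>x m. x \<in> Q \<Longrightarrow> take m x \<in> Q"
  shows "pre Q = Q"
proof
  show "pre Q \<subseteq> Q"
  proof
    fix x assume "x \<in> pre Q"
    then obtain t where "x @ t \<in> Q"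
      unfolding pre_def by blast
    then show "x \<in> Q"
      using assms[of "x @ t" "length x"] by simp
  qed
qed (rule subset_pre)

lemma pre_Un_append_image:
  assumes s: "s \<in> pre C" and B: "\<And>t m. t \<in> B \<Longrightarrow> take m t \<in> B"
  shows "pre (pre C \<union> (@) s ` B) = pre C \<union> (@) s ` B"
proof (rule pre_eqI)
  fix x m assume "x \<in> pre C \<union> (@) s ` B"
  then consider "x \<in> pre C" | t where "x = s @ t" "t \<in> B"
    by blast
  then show "take m x \<in> pre C \<union> (@) s ` B"
  proof cases
    case 1
    then show ?thesis
      using take_mem_pre by blast
  next
    case 2
    then show ?thesis
      using B[of t "m - length s"] take_mem_pre[OF s, of m] by (cases "m \<le> length s") auto
  qed
qed

lemma controllableI:
  "(\<And>x u. x \<in> pre M \<Longrightarrow> u \<in> S \<Longrightarrow> x @ [u] \<in> L \<Longrightarrow> x @ [u] \<in> pre M) \<Longrightarrow> controllable S M L"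
  unfolding controllable_def by blast

lemma controllableD:
  "controllable S M L \<Longrightarrow> x \<in> pre M \<Longrightarrow> u \<in> S \<Longrightarrow> x @ [u] \<in> L \<Longrightarrow> x @ [u] \<in> pre M"
  unfolding controllable_def by blast

lemma controllable_pre_iff: "controllable S (pre M) L \<longleftrightarrow> controllable S M L"
  unfolding controllable_def pre_idem ..

lemma supC_subset: "supC S M L \<subseteq> M"
  unfolding supC_def by blast

lemma supC_greatest: "M' \<subseteq> M \<Longrightarrow> controllable S M' L \<Longrightarrow> M' \<subseteq> supC S M L"
  unfolding supC_def by blast

lemma controllable_supC: "controllable S (supC S M L) L"
proof (rule controllableI)
  fix x u assume x: "x \<in> pre (supC S M L)" and u: "u \<in> S" "x @ [u] \<in> L"
  then obtain y where "x @ y \<in> supC S M L"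
    unfolding pre_def by blast
  then obtain M' where M': "M' \<subseteq> M" "controllable S M' L" "x @ y \<in> M'"
    unfolding supC_def by blast
  then have "x @ [u] \<in> pre M'"
    using controllableD[OF M'(2) _ u] unfolding pre_def by blast
  then show "x @ [u] \<in> pre (supC S M L)"
    using pre_mono[OF supC_greatest[OF M'(1,2)]] by blast
qed

lemma subset_pre_supC:
  assumes "pre Q = Q" "controllable S Q L" "Q \<subseteq> pre (Q \<inter> K)"
  shows "Q \<subseteq> pre (supC S K L)"
proof -
  have Q: "pre (Q \<inter> K) = Q"
    using assms(1,3) pre_mono[of "Q \<inter> K" Q] by blast
  then have "controllable S (Q \<inter> K) L"
    using assms(2) controllable_pre_iff by metis
  then show ?thesis
    using pre_mono[OF supC_greatest[of "Q \<inter> K" K]] Q by blast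
qed

lemma pre_supC_not_K_fc:
  assumes "x \<in> pre (supC S K LG)"
  shows "x \<notin> K_fc S LG K"
proof
  assume "x \<in> K_fc S LG K"
  then obtain u where "u \<in> S" "x @ [u] \<in> LG" "x @ [u] \<notin> pre K"
    unfolding K_fc_def by blast
  then show False
    using controllableD[OF controllable_supC assms] pre_mono[OF supC_subset] by blast
qed

lemma f_optm_memD:
  "t \<in> f_optm S LG K N s \<Longrightarrow> length t \<le> N \<and> (s @ t \<in> K \<or> length t = N \<and> s @ t \<in> pre K)"
  using supC_subset unfolding f_optm_def trunc_def quot_def by fastforce

lemma pre_f_optm_memD:
  assumes "t \<in> pre (f_optm S LG K N s)"
  shows "length t \<le> N" and "s @ t \<in> pre K"
proof -
  obtain w where w: "t @ w \<in> f_optm S LG K N s"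
    using assms unfolding pre_def by blast
  then show "length t \<le> N"
    using f_optm_memD by fastforce
  have "(s @ t) @ w \<in> pre K"
    using f_optm_memD[OF w] subset_pre by auto
  then show "s @ t \<in> pre K"
    by (rule pre_appendD)
qed

lemma pre_f_optm_snoc:
  assumes "t \<in> pre (f_optm S LG K N s)" "u \<in> S" "s @ t @ [u] \<in> LG" "length t < N"
  shows "t @ [u] \<in> pre (f_optm S LG K N s)"
proof -
  have "t @ [u] \<in> trunc (quot LG s) N"
    using assms(3,4) unfolding trunc_def quot_def by simp
  then show ?thesis
    using controllableD[OF controllable_supC assms(1)[unfolded f_optm_def] assms(2)]
    unfolding f_optm_def by simp
qed

lemma pre_f_optm_not_K_fc:
  assumes "t \<in> pre (f_optm S LG K N s)" "length t < N"
  shows "s @ t \<notin> K_fc S LG K"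
proof
  assume "s @ t \<in> K_fc S LG K"
  then obtain u where "u \<in> S" "s @ t @ [u] \<in> LG" "s @ t @ [u] \<notin> pre K"
    unfolding K_fc_def by auto
  then show False
    using pre_f_optm_snoc pre_f_optm_memD(2) assms by fastforce
qed

lemma trunc_quot_pre_subset_pre_f_optm:
  assumes C: "C \<subseteq> K" "controllable S C LG" and N: "0 < N"
  shows "trunc (quot (pre C) s) N \<subseteq> pre (f_optm S LG K N s)"
proof -
  define M where "M = {t. s @ t \<in> pre C \<and> length t \<le> N \<and> (s @ t \<in> K \<or> length t = N)}"
  have pre_M: "t \<in> pre M" if t: "s @ t \<in> pre C" "length t \<le> N" for t
  proof -
    obtain w where w: "s @ t @ w \<in> C"
      using t(1) unfolding pre_def by auto
    define v where "v = take (N - length t) w"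
    have "s @ t @ v \<in> pre C"
      using take_mem_pre[OF subset_pre[THEN subsetD, OF w], of "length s + length t + (N - length t)"]
      unfolding v_def by simp
    moreover have "s @ t @ v \<in> K \<or> length (t @ v) = N"
      using w C(1) t(2) unfolding v_def by (cases "length w \<le> N - length t") auto
    ultimately have "t @ v \<in> M"
      unfolding M_def v_def using t(2) by auto
    then show ?thesis
      unfolding pre_def by blast
  qed
  have "M \<subseteq> f_optm S LG K N s"
    unfolding f_optm_def
  proof (rule supC_greatest)
    show "M \<subseteq> trunc (quot K s) N \<union> (trunc (quot (pre K) s) N - trunc (quot (pre K) s) (N - 1))"
      using N pre_mono[OF C(1)] unfolding M_def trunc_def quot_def by (auto simp flip: length_greater_0_conv)
    show "controllable S M (trunc (quot LG s) N)"
    proof (rule controllableI)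
      fix x u assume "x \<in> pre M" "u \<in> S" "x @ [u] \<in> trunc (quot LG s) N"
      moreover have "s @ x \<in> pre C"
        using \<open>x \<in> pre M\<close> pre_appendD unfolding M_def pre_def by fastforce
      ultimately show "x @ [u] \<in> pre M"
        using controllableD[OF C(2), of "s @ x" u] pre_M unfolding trunc_def quot_def by auto
    qed
  qed
  then show ?thesis
    using pre_M pre_mono unfolding trunc_def quot_def by blast
qed

lemma Nmcf_SomeD: "Nmcf S LG K = Some n \<Longrightarrow> m \<in> Nmcf_set S LG K \<Longrightarrow> m \<le> n"
  unfolding Nmcf_def by (auto split: if_splits)

lemma diff_mem_Nmcf_set:
  assumes "i \<le> j" "j \<le> length x"
    and "take i x \<in> K_mc S LG K \<union> {[]}" "take j x \<in> K_fc S LG K"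
    and between: "\<And>k. i < k \<Longrightarrow> k < j \<Longrightarrow> take k x \<notin> K_fc S LG K \<union> K_mc S LG K"
  shows "j - i \<in> Nmcf_set S LG K"
proof -
  define t where "t = drop i (take j x)"
  have length_t: "length t = j - i"
    unfolding t_def using assms(2) by simp
  have split: "take i x @ take m t = take (i + m) x" if "m \<le> length t" for m
  proof -
    have "take i x @ take m t = take (i + m) (take j x)"
      using assms(1) unfolding t_def take_add by (simp add: min_def)
    also have "\<dots> = take (i + m) x"
      using that length_t assms(1) by (simp add: min_def)
    finally show ?thesis .
  qed
  have t: "take i x @ t = take j x"
    using split[of "length t"] assms(1) length_t by simp
  have inner: "take i x @ v \<notin> K_fc S LG K \<union> K_mc S LG K"
    if "v \<noteq> []" "w \<noteq> []" "t = v @ w" for v w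
  proof -
    have "i < i + length v" "i + length v < j"
      using that length_t assms(1) by (auto simp flip: length_greater_0_conv)
    then show ?thesis
      using between[of "i + length v"] split[of "length v"] that by auto
  qed
  have "j - i = length t \<and> take i x \<in> K_mc S LG K \<union> {[]} \<and> take i x @ t \<in> K_fc S LG K \<and>
      (\<forall>v w. v \<noteq> [] \<and> w \<noteq> [] \<and> t = v @ w \<longrightarrow> take i x @ v \<notin> K_fc S LG K \<union> K_mc S LG K)"
    using assms(3,4) t length_t inner by auto
  then show ?thesis
    unfolding Nmcf_set_def by blast
qed

lemma K_fc_prefix_within_Nmcf:
  assumes n: "Nmcf S LG K = Some n" and x: "x \<in> K_fc S LG K" and i: "i \<le> length x"
    and no_mc: "\<And>k. i < k \<Longrightarrow> k < length x \<Longrightarrow> take k x \<notin> K_mc S LG K"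
  shows "\<exists>j \<le> i + n. take j x \<in> K_fc S LG K"
proof -
  obtain a where a: "a \<le> i" "take a x \<in> K_mc S LG K \<union> {[]}"
    and a_max: "\<And>k. k \<le> i \<Longrightarrow> take k x \<in> K_mc S LG K \<Longrightarrow> k \<le> a"
    using ex_has_greatest_nat[of "\<lambda>k. k \<le> i \<and> take k x \<in> K_mc S LG K \<union> {[]}" 0 "\<lambda>k. k" "Suc i"] by auto
  obtain j where j: "a \<le> j" "j \<le> length x" "take j x \<in> K_fc S LG K"
    and j_min: "\<And>k. a \<le> k \<Longrightarrow> k \<le> length x \<Longrightarrow> take k x \<in> K_fc S LG K \<Longrightarrow> j \<le> k"
    using ex_has_least_nat[of "\<lambda>k. a \<le> k \<and> k \<le> length x \<and> take k x \<in> K_fc S LG K" "length x" id]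
      a(1) i x by auto
  have "j - a \<in> Nmcf_set S LG K"
  proof (rule diff_mem_Nmcf_set[OF j(1,2) a(2) j(3)])
    fix k assume k: "a < k" "k < j"
    then have "take k x \<notin> K_fc S LG K"
      using j_min[of k] j(2) by auto
    moreover have "take k x \<notin> K_mc S LG K"
      using a_max[of k] no_mc[of k] k j(2) by (cases "k \<le> i") auto
    ultimately show "take k x \<notin> K_fc S LG K \<union> K_mc S LG K"
      by blast
  qed
  then have "j \<le> i + n"
    using Nmcf_SomeD[OF n] a(1) by fastforce
  then show ?thesis
    using j(3) by blast
qed

definition inner_K_mc_free :: "'a set \<Rightarrow> 'a list set \<Rightarrow> 'a list set \<Rightarrow> 'a list \<Rightarrow> 'a list \<Rightarrow> bool" where
  "inner_K_mc_free S LG K s t \<longleftrightarrow> (\<forall>k. 0 < k \<longrightarrow> k < length t \<longrightarrow> s @ take k t \<notin> K_mc S LG K)"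

lemma inner_K_mc_free_take:
  "inner_K_mc_free S LG K s t \<Longrightarrow> inner_K_mc_free S LG K s (take m t)"
  unfolding inner_K_mc_free_def by (simp add: min_def)

lemma inner_K_mc_free_append:
  assumes t: "inner_K_mc_free S LG K s t"
    and v: "\<And>k. k < length v \<Longrightarrow> s @ t @ take k v \<notin> K_mc S LG K"
  shows "inner_K_mc_free S LG K s (t @ v)"
  unfolding inner_K_mc_free_def
proof (intro allI impI)
  fix k assume "0 < k" "k < length (t @ v)"
  then show "s @ take k (t @ v) \<notin> K_mc S LG K"
    using t v[of "k - length t"] unfolding inner_K_mc_free_def by (cases "k < length t") auto
qed

definition optm_reach :: "'a set \<Rightarrow> 'a list set \<Rightarrow> 'a list set \<Rightarrow> nat \<Rightarrow> 'a list \<Rightarrow> 'a list set" where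
  "optm_reach S LG K N s =
     {t. take N t \<in> pre (f_optm S LG K N s) \<and> s @ t \<in> pre K \<and> inner_K_mc_free S LG K s t}"

lemma take_mem_optm_reach:
  assumes t: "t \<in> optm_reach S LG K N s"
  shows "take m t \<in> optm_reach S LG K N s"
proof -
  have "take m (take N t) \<in> pre (f_optm S LG K N s)"
    using t take_mem_pre unfolding optm_reach_def by blast
  moreover have "take (length s + m) (s @ t) \<in> pre K"
    using t take_mem_pre unfolding optm_reach_def by blast
  moreover have "inner_K_mc_free S LG K s (take m t)"
    using t inner_K_mc_free_take unfolding optm_reach_def by blast
  ultimately show ?thesis
    unfolding optm_reach_def by (simp add: min.commute)
qed

lemma f_optm_extend:
  assumes "u \<in> f_optm S LG K N s"
  obtains w where "s @ u @ w \<in> K" "take N (u @ w) = u"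
proof -
  from f_optm_memD[OF assms] consider "length u \<le> N" "s @ u \<in> K"
    | "length u = N" "s @ u \<in> pre K" by blast
  then show thesis
  proof cases
    case 1
    then show thesis using that[of "[]"] by simp
  next
    case 2
    then obtain w where "s @ u @ w \<in> K" unfolding pre_def by auto
    then show thesis using that 2(1) by simp
  qed
qed

lemma pre_f_optm_extend:
  assumes t: "take N t \<in> pre (f_optm S LG K N s)" "s @ t \<in> pre K"
  obtains w where "s @ t @ w \<in> K" "take N (t @ w) \<in> pre (f_optm S LG K N s)"
proof (cases "length t < N")
  case True
  then obtain w' where "t @ w' \<in> f_optm S LG K N s"
    using t(1) unfolding pre_def by auto
  moreover from f_optm_extend[OF this] obtain w''
    where "s @ (t @ w') @ w'' \<in> K" "take N ((t @ w') @ w'') = t @ w'" .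
  ultimately show thesis
    using that[of "w' @ w''"] subset_pre by fastforce
next
  case False
  obtain w where "s @ t @ w \<in> K"
    using t(2) unfolding pre_def by auto
  then show thesis
    using that[of w] t(1) False by simp
qed

lemma optm_reach_extend:
  assumes t: "t \<in> optm_reach S LG K N s"
  obtains v where "t @ v \<in> optm_reach S LG K N s" "s @ t @ v \<in> K"
proof -
  obtain w where w: "s @ t @ w \<in> K" "take N (t @ w) \<in> pre (f_optm S LG K N s)"
    using t pre_f_optm_extend unfolding optm_reach_def by blast
  obtain i where i: "s @ t @ take i w \<in> K_mc S LG K \<or> i = length w"
    and i_min: "\<And>k. s @ t @ take k w \<in> K_mc S LG K \<or> k = length w \<Longrightarrow> i \<le> k"
    using ex_has_least_nat[of "\<lambda>k. s @ t @ take k w \<in> K_mc S LG K \<or> k = length w" "length w" id]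
    by auto
  define v where "v = take i w"
  have "i \<le> length w"
    using i_min by blast
  have "s @ t @ v \<in> K"
    using i w(1) unfolding v_def K_mc_def by auto
  moreover have "take N (t @ v) = take (length t + i) (take N (t @ w))"
    using take_take[of N "length t + i" "t @ w"] take_take[of "length t + i" N "t @ w"]
    unfolding v_def by (simp add: min.commute)
  moreover have "inner_K_mc_free S LG K s (t @ v)"
  proof (rule inner_K_mc_free_append)
    show "inner_K_mc_free S LG K s t"
      using t unfolding optm_reach_def by blast
    fix k assume "k < length v"
    then have "k < i"
      unfolding v_def by simp
    then show "s @ t @ take k v \<notin> K_mc S LG K"
      using i_min[of k] unfolding v_def by (auto simp: min_def)
  qed
  ultimately have "t @ v \<in> optm_reach S LG K N s"
    using w(2) take_mem_pre subset_pre unfolding optm_reach_def by fastforce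
  then show thesis
    using that \<open>s @ t @ v \<in> K\<close> by blast
qed

context
  fixes S :: "'a set" and LG K :: "'a list set" and N n :: nat and s :: "'a list"
  assumes s_legal: "s \<in> pre (supC S K LG)"
    and Nmcf_eq: "Nmcf S LG K = Some n"
    and horizon: "n < N"
begin

lemma optm_reach_not_K_fc:
  assumes t: "t \<in> optm_reach S LG K N s"
  shows "s @ t \<notin> K_fc S LG K"
proof
  assume fc: "s @ t \<in> K_fc S LG K"
  have "take k (s @ t) \<notin> K_mc S LG K" if "length s < k" "k < length (s @ t)" for k
    using t that unfolding optm_reach_def inner_K_mc_free_def by auto
  then obtain j where j: "j \<le> length s + n" "take j (s @ t) \<in> K_fc S LG K"
    using K_fc_prefix_within_Nmcf[OF Nmcf_eq fc, of "length s"] by auto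
  show False
  proof (cases "j \<le> length s")
    case True
    then show False
      using take_mem_pre[OF s_legal, of j] pre_supC_not_K_fc j(2) by auto
  next
    case False
    define t' where "t' = take (j - length s) t"
    have "j - length s < N"
      using horizon j(1) by linarith
    then have "t' = take (j - length s) (take N t)"
      unfolding t'_def by (simp add: min_def)
    moreover have "take (j - length s) (take N t) \<in> pre (f_optm S LG K N s)"
      using t take_mem_pre unfolding optm_reach_def by blast
    ultimately have "t' \<in> pre (f_optm S LG K N s)"
      by simp
    moreover have "length t' < N"
      using \<open>j - length s < N\<close> unfolding t'_def by simp
    ultimately show False
      using pre_f_optm_not_K_fc j(2) False unfolding t'_def by fastforce
  qed
qed

lemma optm_reach_snoc:
  assumes t: "t \<in> optm_reach S LG K N s" and u: "u \<in> S" "s @ t @ [u] \<in> LG"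
  shows "t @ [u] \<in> optm_reach S LG K N s"
proof -
  have "s @ t \<notin> K_mc S LG K"
    using u unfolding K_mc_def Lc_def by auto
  then have "inner_K_mc_free S LG K s (t @ [u])"
    using t inner_K_mc_free_append[of S LG K s t "[u]"] unfolding optm_reach_def by auto
  moreover have "s @ t @ [u] \<in> pre K"
    using optm_reach_not_K_fc[OF t] t u unfolding optm_reach_def K_fc_def by auto
  moreover have "take N (t @ [u]) \<in> pre (f_optm S LG K N s)"
    using t pre_f_optm_snoc[of t S LG K N s u] u unfolding optm_reach_def
    by (cases "length t < N") auto
  ultimately show ?thesis
    unfolding optm_reach_def by simp
qed

lemma pre_supC_if_pre_f_optm:
  assumes \<sigma>: "[\<sigma>] \<in> pre (f_optm S LG K N s)"
  shows "s @ [\<sigma>] \<in> pre (supC S K LG)"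
proof -
  define Q where "Q = pre (supC S K LG) \<union> (@) s ` optm_reach S LG K N s"
  have Q_closed: "pre Q = Q"
    unfolding Q_def by (rule pre_Un_append_image[OF s_legal take_mem_optm_reach])
  have "controllable S Q LG"
  proof (rule controllableI)
    fix x u assume "x \<in> pre Q" "u \<in> S" "x @ [u] \<in> LG"
    then show "x @ [u] \<in> pre Q"
      unfolding Q_closed unfolding Q_def
      using controllableD[OF controllable_supC] optm_reach_snoc by fastforce
  qed
  moreover have "Q \<subseteq> pre (Q \<inter> K)"
  proof
    fix x assume "x \<in> Q"
    then consider "x \<in> pre (supC S K LG)" | t where "x = s @ t" "t \<in> optm_reach S LG K N s"
      unfolding Q_def by blast
    then show "x \<in> pre (Q \<inter> K)"
    proof cases
      case 1
      then obtain w where "x @ w \<in> supC S K LG"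
        unfolding pre_def by blast
      then show ?thesis
        using subset_pre supC_subset unfolding Q_def pre_def by blast
    next
      case 2
      then obtain v where "t @ v \<in> optm_reach S LG K N s" "s @ t @ v \<in> K"
        using optm_reach_extend by blast
      then have "x @ v \<in> Q \<inter> K"
        using 2(1) unfolding Q_def by auto
      then show ?thesis
        unfolding pre_def by blast
    qed
  qed
  ultimately have "Q \<subseteq> pre (supC S K LG)"
    by (rule subset_pre_supC[OF Q_closed])
  moreover have "[\<sigma>] \<in> optm_reach S LG K N s"
    using \<sigma> pre_f_optm_memD(2)[OF \<sigma>] horizon
    unfolding optm_reach_def inner_K_mc_free_def by (cases N) auto
  ultimately show ?thesis
    unfolding Q_def by blast
qed

lemma mem_gamma_optm_iff:
  assumes "s @ [\<sigma>] \<in> LG"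
  shows "\<sigma> \<in> gamma_optm S LG K N s \<longleftrightarrow> s @ [\<sigma>] \<in> pre (supC S K LG)"
proof
  assume "\<sigma> \<in> gamma_optm S LG K N s"
  then consider "[\<sigma>] \<in> pre (f_optm S LG K N s)" | "\<sigma> \<in> S"
    unfolding gamma_optm_def by blast
  then show "s @ [\<sigma>] \<in> pre (supC S K LG)"
  proof cases
    case 1
    then show ?thesis
      by (rule pre_supC_if_pre_f_optm)
  next
    case 2
    then show ?thesis
      using controllableD[OF controllable_supC s_legal _ assms] by blast
  qed
next
  assume "s @ [\<sigma>] \<in> pre (supC S K LG)"
  then have "[\<sigma>] \<in> trunc (quot (pre (supC S K LG)) s) N"
    using horizon unfolding trunc_def quot_def by simp
  moreover have "0 < N"
    using horizon by simp
  ultimately have "[\<sigma>] \<in> pre (f_optm S LG K N s)"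
    using trunc_quot_pre_subset_pre_f_optm[OF supC_subset controllable_supC] by blast
  then show "\<sigma> \<in> gamma_optm S LG K N s"
    unfolding gamma_optm_def by blast
qed

end

lemma closed_loop_eqI:
  assumes "[] \<in> R" "pre R = R" "R \<subseteq> LG"
    and step: "\<And>s \<sigma>. s \<in> R \<Longrightarrow> s @ [\<sigma>] \<in> LG \<Longrightarrow> \<sigma> \<in> \<gamma> s \<longleftrightarrow> s @ [\<sigma>] \<in> R"
  shows "closed_loop LG \<gamma> = R"
proof
  show "closed_loop LG \<gamma> \<subseteq> R"
  proof
    fix x assume "x \<in> closed_loop LG \<gamma>"
    then show "x \<in> R"
      by induction (use assms in blast)+
  qed
  show "R \<subseteq> closed_loop LG \<gamma>"
  proof
    fix x assume "x \<in> R"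
    then show "x \<in> closed_loop LG \<gamma>"
    proof (induction x rule: rev_induct)
      case (snoc \<sigma> s)
      then have "s \<in> R"
        using pre_appendD assms(2) by blast
      then show ?case
        using snoc step assms(3) by (blast intro: closed_loop.step)
    qed (rule closed_loop.eps)
  qed
qed

theorem theorem11:
  fixes Suc' :: "'a::finite set"
    and LG LmG K :: "'a list set"
    and N n :: nat
  assumes plant: "LG = pre LmG"
    and K_sub: "K \<subseteq> LmG"
    and K_closed: "K = pre K \<inter> LmG"
    and nonempty: "supC Suc' K LG \<noteq> {}"
    and defined: "Nmcf Suc' LG K = Some n"
    and N_ge: "N \<ge> n + 1"
  shows "closed_loop LG (gamma_optm Suc' LG K N) = pre (supC Suc' K LG)"
proof (rule closed_loop_eqI)
  show "[] \<in> pre (supC Suc' K LG)"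
    using nonempty unfolding pre_def by auto
  show "pre (supC Suc' K LG) \<subseteq> LG"
    unfolding plant by (rule pre_mono[OF subset_trans[OF supC_subset K_sub]])
  have horizon: "n < N"
    using N_ge by simp
  fix s \<sigma> assume "s \<in> pre (supC Suc' K LG)" "s @ [\<sigma>] \<in> LG"
  then show "\<sigma> \<in> gamma_optm Suc' LG K N s \<longleftrightarrow> s @ [\<sigma>] \<in> pre (supC Suc' K LG)"
    by (rule mem_gamma_optm_iff[OF _ defined horizon])
qed (rule pre_idem)

end
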